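(* Let $d\in\mathbb{N}$. The set $\Pi\subset\mathbb{R}^d\times\mathbb{R}^d$ is Lebesgue measurable and has Lebesgue measure $0$. Moreover, for every $x\in\mathbb{R}^d$, the set $\Phi(x)\subset\mathbb{R}^d$ has Lebesgue measure $0$.
   Context: For $z\in\mathbb{R}^d$, $\|z\|$ denotes the sup-norm distance from $z$ to $\mathbb{Z}^d$. Write $\mathbb{N}=\{1,2,3,\dots\}$. For $\psi:\mathbb{N}\to\mathbb{R}_{\ge 0}$, let $W(\psi)$ be the set of pairs $(x,y)\in\mathbb{R}^d\times\mathbb{R}^d$ for which $\|nx+y\|<\psi(n)$ holds for infinitely many $n\in\mathbb{N}$. $\mathcal{D}$ is the set of all non-increasing $\psi:\mathbb{N}\to\mathbb{R}_{\ge0}$ with $\sum_n\psi(n)^d=\infty$. $\Pi=\bigcap_{\psi\in\mathcal{D}}W(\psi)$, and $\Phi(x)=\{y\in\mathbb{R}^d:(x,y)\in\Pi\}$. *)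

theory Defs
  imports "HOL-Analysis.Analysis"
begin

definition distZ :: "real ^ 'n \<Rightarrow> real" where
  "distZ z = (INF k \<in> {k :: real ^ 'n. \<forall>i. k $ i \<in> \<int>}. Max (range (\<lambda>i. \<bar>z $ i - k $ i\<bar>)))"

definition W :: "(nat \<Rightarrow> real) \<Rightarrow> ((real ^ 'n) \<times> (real ^ 'n)) set" where
  "W \<psi> = {(x, y). infinite {n :: nat. n \<ge> 1 \<and> distZ (real n *\<^sub>R x + y) < \<psi> n}}"

text \<open>The class D (for dimension d = CARD('n)): non-increasing, nonnegative psi on N with
  divergent sum of psi(n)^d. Only the values at n >= 1 matter.\<close>
definition Dcls :: "'n itself \<Rightarrow> (nat \<Rightarrow> real) set" where
  "Dcls _ = {\<psi>. (\<forall>n\<ge>1. 0 \<le> \<psi> n) \<and> (\<forall>m n. 1 \<le> m \<longrightarrow> m \<le> n \<longrightarrow> \<psi> n \<le> \<psi> m)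
              \<and> \<not> summable (\<lambda>n. \<psi> (Suc n) ^ CARD('n))}"

definition Pi_set :: "((real ^ 'n) \<times> (real ^ 'n)) set" where
  "Pi_set = (\<Inter>\<psi> \<in> Dcls TYPE('n). W \<psi>)"

definition Phi :: "real ^ 'n \<Rightarrow> (real ^ 'n) set" where
  "Phi x = {y. (x, y) \<in> Pi_set}"

end

theory Submission
  imports Defs
begin

text \<open>If \<open>(x, y) \<in> \<Pi>\<close>, the running minimum \<open>\<psi>(n) = min\<^sub>m\<^sub>\<le>\<^sub>n \<parallel>m x + y\<parallel>\<close> is non-increasing and never
  beaten strictly, so \<open>(x, y) \<notin> W(\<psi>)\<close> forces \<open>\<Sum> \<psi>(n)^d < \<infinity>\<close> and hence \<open>n \<psi>(n)^d \<rightarrow> 0\<close>.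
  Thus for each \<open>t > 0\<close> and all large \<open>n\<close> some \<open>m \<le> n\<close> has \<open>\<parallel>m x + y\<parallel>^d < t/n\<close>. For fixed \<open>x\<close>
  and \<open>m\<close> the admissible \<open>y\<close> in a cube \<open>[-M, M]^d\<close> form \<open>O\<^sub>M(1)\<close> boxes of volume \<open>2^d t/n\<close>, so summing
  over \<open>m \<le> n\<close> the fibre of this Borel superset of \<open>\<Pi>\<close> has measure \<open>O\<^sub>M(t)\<close> in the cube.
  Letting \<open>t \<rightarrow> 0\<close> every fibre is null, and Tonelli makes the superset itself null.\<close>

lemma distZ_less_iff:
  fixes w :: "real ^ 'n"
  shows "distZ w < r \<longleftrightarrow> (\<exists>k. (\<forall>i. k $ i \<in> \<int>) \<and> (\<forall>i. \<bar>w $ i - k $ i\<bar> < r))"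
proof -
  let ?L = "{k :: real ^ 'n. \<forall>i. k $ i \<in> \<int>}"
  let ?f = "\<lambda>k. Max (range (\<lambda>i. \<bar>w $ i - k $ i\<bar>))"
  have "(0 :: real ^ 'n) \<in> ?L" by simp
  then have "?L \<noteq> {}" by blast
  moreover have "bdd_below (?f ` ?L)"
    by (rule bdd_belowI[of _ 0]) (auto simp: Max_ge_iff)
  moreover have "?f k < r \<longleftrightarrow> (\<forall>i. \<bar>w $ i - k $ i\<bar> < r)" for k
    by (subst Max_less_iff) auto
  ultimately show ?thesis
    unfolding distZ_def using cInf_less_iff[of "?f ` ?L" r] by auto
qed

lemma distZ_nonneg: "0 \<le> distZ (w :: real ^ 'n)"
  using distZ_less_iff[of w 0] by (meson abs_not_less_zero not_le)

lemma open_distZ_less: "open {w :: real ^ 'n. distZ w < r}"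
proof -
  have "{w :: real ^ 'n. distZ w < r} = (\<Union>k \<in> {k. \<forall>i. k $ i \<in> \<int>}. box (k - vec r) (k + vec r))"
    by (auto simp: distZ_less_iff mem_box_cart abs_less_iff) (metis add.commute diff_less_eq)+
  then show ?thesis by auto
qed

lemma summable_decseq_mult_LIMSEQ_0:
  fixes f :: "nat \<Rightarrow> real"
  assumes summable: "summable f" and nonneg: "\<And>n. 0 \<le> f n" and dec: "decseq f"
  shows "(\<lambda>n. real n * f n) \<longlonglongrightarrow> 0"
proof (rule LIMSEQ_I)
  fix t :: real assume "0 < t"
  then obtain N where N: "\<And>m n. m \<ge> N \<Longrightarrow> norm (\<Sum>k=m..n. f k) < t/2"
    using summable_partial_sum_bound[OF summable, of "t/2"] by auto
  have "norm (real n * f n) < t" if "n \<ge> 2*N" for n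
  proof -
    have "real (card {N..n}) * f n \<le> (\<Sum>k=N..n. f k)"
      by (rule sum_bounded_below) (auto intro: decseqD[OF dec])
    also have "\<dots> < t/2" using N[of N n] sum_nonneg[of "{N..n}" f] nonneg by auto
    finally have "real (Suc n - N) * f n < t/2" by simp
    moreover have "real n \<le> 2 * real (Suc n - N)" using that by auto
    ultimately show ?thesis
      using nonneg[of n] mult_right_mono[of "real n" "2 * real (Suc n - N)" "f n"] by auto
  qed
  then show "\<exists>N. \<forall>n\<ge>N. norm (real n * f n - 0) < t" by auto
qed

lemma mem_cube_iff: "(y :: real ^ 'n) \<in> cbox (- vec a) (vec a) \<longleftrightarrow> (\<forall>i. \<bar>y $ i\<bar> \<le> a)"
  by (auto simp: mem_box_cart abs_le_iff) (metis minus_le_iff)+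

lemma vec_inner_Basis: "b \<in> (Basis :: (real ^ 'n) set) \<Longrightarrow> vec a \<bullet> b = a"
  by (auto simp: Basis_vec_def inner_axis)

lemma emeasure_lborel_box_vec:
  fixes c :: "real ^ 'n"
  assumes "0 \<le> r"
  shows "emeasure lborel (box (c - vec r) (c + vec r)) = ennreal ((2*r) ^ CARD('n))"
proof -
  have "(c + vec r) - (c - vec r) = vec (2*r)" by (simp add: vec_eq_iff)
  then have "emeasure lborel (box (c - vec r) (c + vec r)) = (\<Prod>b\<in>(Basis :: (real ^ 'n) set). vec (2*r) \<bullet> b)"
    using assms by (subst emeasure_lborel_box) (auto simp: inner_diff_left inner_add_left vec_inner_Basis)
  also have "\<dots> = (2*r) ^ CARD('n)" by (simp add: vec_inner_Basis)
  finally show ?thesis .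
qed

lemma floor_offset_bound:
  fixes k z y :: real
  assumes "k \<in> \<int>" and "\<bar>z + y - k\<bar> < 1" and "\<bar>y\<bar> \<le> real M"
  shows "\<bar>\<lfloor>k\<rfloor> - \<lfloor>z\<rfloor>\<bar> \<le> int M + 1"
proof -
  have "real_of_int \<lfloor>k\<rfloor> = k" using assms(1) by (auto elim: Ints_cases)
  moreover have "real_of_int \<lfloor>z\<rfloor> \<le> z" "z < real_of_int \<lfloor>z\<rfloor> + 1" by linarith+
  ultimately have "\<bar>real_of_int (\<lfloor>k\<rfloor> - \<lfloor>z\<rfloor>)\<bar> < real M + 2"
    using assms(2,3) by (simp add: abs_less_iff abs_le_iff) linarith
  then show ?thesis by linarith
qed

text \<open>Inside the cube \<open>[-M, M]^d\<close>, the set \<open>{y. distZ (z + y) < r}\<close> is covered by the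
  \<open>(2M+3)^d\<close> boxes of side \<open>2r\<close> centred at the points \<open>k - z\<close> with \<open>k\<close> a lattice point
  within \<open>M + 1\<close> of \<open>\<lfloor>z\<rfloor>\<close> in each coordinate.\<close>
lemma emeasure_distZ_less_cube_le:
  fixes z :: "real ^ 'n"
  assumes r0: "0 < r" and r1: "r \<le> 1"
  shows "emeasure lborel ({y. distZ (z + y) < r} \<inter> cbox (- vec (real M)) (vec (real M)))
     \<le> ennreal (real ((2*M+3) ^ CARD('n)) * (2*r) ^ CARD('n))"
proof -
  define J where "J = Pi\<^sub>E (UNIV :: 'n set) (\<lambda>_. {-(int M+1)..int M+1})"
  define c where "c j = (\<chi> i. real_of_int (\<lfloor>z $ i\<rfloor> + j i)) - z" for j :: "'n \<Rightarrow> int"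
  have "finite J" unfolding J_def by (intro finite_PiE) auto
  have card_J: "card J = (2*M+3) ^ CARD('n)"
    unfolding J_def by (subst card_PiE) (auto simp: nat_add_distrib nat_mult_distrib add.commute)
  have cover: "{y. distZ (z + y) < r} \<inter> cbox (- vec (real M)) (vec (real M))
      \<subseteq> (\<Union>j\<in>J. box (c j - vec r) (c j + vec r))"
  proof
    fix y assume "y \<in> {y. distZ (z + y) < r} \<inter> cbox (- vec (real M)) (vec (real M))"
    then have d: "distZ (z + y) < r" and y: "\<And>i. \<bar>y $ i\<bar> \<le> real M"
      by (auto simp: mem_cube_iff)
    obtain k where k: "\<And>i. k $ i \<in> \<int>" and near: "\<And>i. \<bar>(z + y) $ i - k $ i\<bar> < r"
      using d distZ_less_iff by blast
    define j where "j i = \<lfloor>k $ i\<rfloor> - \<lfloor>z $ i\<rfloor>" for i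
    have "\<bar>j i\<bar> \<le> int M + 1" for i
      unfolding j_def using near[of i] r1 by (intro floor_offset_bound[OF k _ y[of i]]) simp
    then have "j \<in> J" unfolding J_def by (force simp: abs_le_iff)
    moreover have "c j $ i = k $ i - z $ i" for i
      using k[of i] unfolding c_def j_def by (auto elim: Ints_cases)
    then have "y \<in> box (c j - vec r) (c j + vec r)"
      using near by (auto simp: mem_box_cart abs_less_iff) (smt (verit))+
    ultimately show "y \<in> (\<Union>j\<in>J. box (c j - vec r) (c j + vec r))" by blast
  qed
  have "emeasure lborel ({y. distZ (z + y) < r} \<inter> cbox (- vec (real M)) (vec (real M)))
       \<le> emeasure lborel (\<Union>j\<in>J. box (c j - vec r) (c j + vec r))"
    by (rule emeasure_mono[OF cover]) auto
  also have "\<dots> \<le> (\<Sum>j\<in>J. emeasure lborel (box (c j - vec r) (c j + vec r)))"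
    by (rule emeasure_subadditive_finite[OF \<open>finite J\<close>]) auto
  also have "\<dots> = ennreal (real ((2*M+3) ^ CARD('n)) * (2*r) ^ CARD('n))"
    using card_J r0 by (simp add: emeasure_lborel_box_vec ennreal_mult' ennreal_of_nat_eq_real_of_nat)
  finally show ?thesis .
qed

lemma emeasure_le_of_subset_liminf:
  fixes A :: "nat \<Rightarrow> 'a set"
  assumes "range A \<subseteq> sets M" and "B \<subseteq> (\<Union>K. \<Inter>n\<in>{K..}. A n)" and "\<And>n. emeasure M (A n) \<le> c"
  shows "emeasure M B \<le> c"
proof -
  define S where "S K = (\<Inter>n\<in>{K..}. A n)" for K
  have "S K \<in> sets M" for K
    unfolding S_def using assms(1) by (intro sets.countable_INT) auto
  then have S: "range S \<subseteq> sets M" by blast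
  have "emeasure M B \<le> emeasure M (\<Union>K. S K)"
    using assms(2) S by (intro emeasure_mono) (auto simp: S_def)
  also have "\<dots> = (SUP K. emeasure M (S K))"
    using S by (intro SUP_emeasure_incseq[symmetric]) (auto simp: S_def incseq_def)
  also have "\<dots> \<le> c"
  proof (rule SUP_least)
    fix K
    have "emeasure M (S K) \<le> emeasure M (A K)"
      using assms(1) by (intro emeasure_mono) (auto simp: S_def)
    then show "emeasure M (S K) \<le> c" using assms(3) order.trans by blast
  qed
  finally show ?thesis .
qed

lemma null_sets_lborel_if_cube_inter_null:
  fixes S :: "(real ^ 'n) set"
  assumes "S \<in> sets lborel"
    and "\<And>M::nat. emeasure lborel (S \<inter> cbox (- vec (real M)) (vec (real M))) = 0"
  shows "S \<in> null_sets lborel"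
proof -
  have "S = (\<Union>M::nat. S \<inter> cbox (- vec (real M)) (vec (real M)))"
  proof (intro equalityI subsetI)
    fix y assume "y \<in> S"
    obtain M :: nat where "norm y \<le> real M" using real_arch_simple by blast
    then have "y \<in> cbox (- vec (real M)) (vec (real M))"
      by (auto simp: mem_cube_iff intro: order.trans[OF component_le_norm_cart])
    with \<open>y \<in> S\<close> show "y \<in> (\<Union>M. S \<inter> cbox (- vec (real M)) (vec (real M)))" by blast
  qed blast
  also have "\<dots> \<in> null_sets lborel"
    using assms by (intro null_sets_UN null_setsI) auto
  finally show ?thesis .
qed

lemma (in sigma_finite_measure) null_sets_pair_measure_if_fibers_null:
  assumes "A \<in> sets (N \<Otimes>\<^sub>M M)" and "\<And>x. x \<in> space N \<Longrightarrow> Pair x -` A \<in> null_sets M"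
  shows "A \<in> null_sets (N \<Otimes>\<^sub>M M)"
proof -
  have "emeasure (N \<Otimes>\<^sub>M M) A = (\<integral>\<^sup>+x. 0 \<partial>N)"
    unfolding emeasure_pair_measure_alt[OF assms(1)] using assms(2) by (intro nn_integral_cong) auto
  then show ?thesis using assms(1) by (intro null_setsI) auto
qed

definition approx_set :: "real \<Rightarrow> nat \<Rightarrow> ((real ^ 'n) \<times> (real ^ 'n)) set" where
  "approx_set t n = {(x, y). \<exists>m\<in>{1..n}. distZ (real m *\<^sub>R x + y) < root CARD('n) (t / real n)}"

text \<open>The pairs for which \<open>n \<psi>(n)^d \<rightarrow> 0\<close>, where \<open>\<psi>(n) = min\<^sub>m\<^sub>\<le>\<^sub>n distZ (m x + y)\<close>.\<close>
definition fast_approx_set :: "((real ^ 'n) \<times> (real ^ 'n)) set" where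
  "fast_approx_set = (\<Inter>j. \<Union>K. \<Inter>n\<in>{K..}. approx_set (1 / real (Suc j)) n)"

lemma Pi_set_subset_fast_approx_set: "(Pi_set :: ((real ^ 'n) \<times> (real ^ 'n)) set) \<subseteq> fast_approx_set"
proof clarify
  fix x y :: "real ^ 'n"
  assume xy: "(x, y) \<in> Pi_set"
  define \<psi> where "\<psi> n = Min ((\<lambda>m. distZ (real m *\<^sub>R x + y)) ` {1..max 1 n})" for n
  have \<psi>_attained: "\<psi> n \<in> (\<lambda>m. distZ (real m *\<^sub>R x + y)) ` {1..max 1 n}" for n
    unfolding \<psi>_def by (intro Min_in) auto
  have \<psi>_nonneg: "0 \<le> \<psi> n" for n
    using \<psi>_attained[of n] distZ_nonneg by auto
  have \<psi>_le: "\<psi> n \<le> distZ (real n *\<^sub>R x + y)" if "n \<ge> 1" for n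
    unfolding \<psi>_def using that by (intro Min_le) auto
  have "decseq \<psi>"
    unfolding \<psi>_def decseq_def by (intro allI impI Min_antimono) auto
  have "(x, y) \<notin> W \<psi>"
  proof -
    have "{n. n \<ge> 1 \<and> distZ (real n *\<^sub>R x + y) < \<psi> n} = {}"
      using \<psi>_le by force
    then show ?thesis by (simp only: W_def mem_Collect_eq prod.case) simp
  qed
  then have "\<psi> \<notin> Dcls TYPE('n)"
    using xy unfolding Pi_set_def by blast
  then have "summable (\<lambda>n. \<psi> (Suc n) ^ CARD('n))"
    using \<psi>_nonneg decseqD[OF \<open>decseq \<psi>\<close>] unfolding Dcls_def by auto
  then have lim: "(\<lambda>n. real n * \<psi> n ^ CARD('n)) \<longlonglongrightarrow> 0"
    using \<psi>_nonneg decseqD[OF \<open>decseq \<psi>\<close>] summable_Suc_iff[of "\<lambda>n. \<psi> n ^ CARD('n)"]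
    by (intro summable_decseq_mult_LIMSEQ_0) (auto simp: decseq_def intro: power_mono)
  show "(x, y) \<in> fast_approx_set"
    unfolding fast_approx_set_def
  proof (intro InterI, clarsimp)
    fix j :: nat
    define t where "t = 1 / real (Suc j)"
    obtain K where K: "\<And>n. n \<ge> K \<Longrightarrow> real n * \<psi> n ^ CARD('n) < t"
      using order_tendstoD(2)[OF lim, of t] unfolding t_def eventually_sequentially by auto
    have "(x, y) \<in> approx_set t n" if "n \<ge> Suc K" for n
    proof -
      have "\<psi> n ^ CARD('n) < t / real n"
        using K[of n] that by (simp add: field_simps)
      then have "\<psi> n < root CARD('n) (t / real n)"
        using \<psi>_nonneg[of n] real_root_less_mono[of "CARD('n)" "\<psi> n ^ CARD('n)" "t / real n"]
        by (simp add: real_root_power_cancel)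
      with \<psi>_attained[of n] that show ?thesis unfolding approx_set_def by auto
    qed
    then show "\<exists>K. \<forall>n\<in>{K..}. (x, y) \<in> approx_set (1 / (1 + real j)) n"
      unfolding t_def by auto
  qed
qed

lemma open_approx_set: "open (approx_set t n :: ((real ^ 'n) \<times> (real ^ 'n)) set)"
proof -
  have "(approx_set t n :: ((real ^ 'n) \<times> (real ^ 'n)) set)
      = (\<Union>m\<in>{1..n}. (\<lambda>p. real m *\<^sub>R fst p + snd p) -` {w. distZ w < root CARD('n) (t / real n)})"
    by (auto simp: approx_set_def)
  then show ?thesis
    by (simp only:) (intro open_UN ballI continuous_open_vimage open_distZ_less continuous_intros)
qed

lemma fast_approx_set_borel: "(fast_approx_set :: ((real ^ 'n) \<times> (real ^ 'n)) set) \<in> sets borel"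
  unfolding fast_approx_set_def
  by (intro sets.countable_INT'' sets.countable_UN'' borel_open open_approx_set) auto

lemma emeasure_approx_set_fiber_cube_le:
  fixes x :: "real ^ 'n"
  assumes t0: "0 < t" and t1: "t \<le> 1"
  shows "emeasure lborel (Pair x -` approx_set t n \<inter> cbox (- vec (real M)) (vec (real M)))
     \<le> ennreal (real ((2*M+3) ^ CARD('n)) * 2 ^ CARD('n) * t)"
proof (cases "n = 0")
  case True
  then show ?thesis by (simp add: approx_set_def)
next
  case False
  define r where "r = root CARD('n) (t / real n)"
  define C where "C = real ((2*M+3) ^ CARD('n))"
  define Q where "Q = cbox (- vec (real M)) (vec (real M) :: real ^ 'n)"
  have "0 < t / real n" "t / real n \<le> 1"
    using t0 t1 False by (auto simp: divide_le_eq_1)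
  then have r0: "0 < r" and r1: "r \<le> 1" and r_pow: "r ^ CARD('n) = t / real n"
    unfolding r_def by auto
  have "open ((\<lambda>y. real m *\<^sub>R x + y) -` {w. distZ w < r})" for m
    by (intro continuous_open_vimage open_distZ_less continuous_intros)
  then have meas: "{y. distZ (real m *\<^sub>R x + y) < r} \<inter> Q \<in> sets lborel" for m
    unfolding Q_def vimage_def by simp
  have fiber: "Pair x -` approx_set t n \<inter> Q = (\<Union>m\<in>{1..n}. {y. distZ (real m *\<^sub>R x + y) < r} \<inter> Q)"
    unfolding approx_set_def r_def by auto
  have "emeasure lborel (Pair x -` approx_set t n \<inter> Q)
      \<le> (\<Sum>m\<in>{1..n}. emeasure lborel ({y. distZ (real m *\<^sub>R x + y) < r} \<inter> Q))"
    unfolding fiber by (rule emeasure_subadditive_finite) (use meas in auto)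
  also have "\<dots> \<le> (\<Sum>m\<in>{1..n}. ennreal (C * (2*r) ^ CARD('n)))"
    unfolding C_def Q_def by (intro sum_mono emeasure_distZ_less_cube_le r0 r1)
  also have "\<dots> = ennreal (real n * (C * (2*r) ^ CARD('n)))"
    using r0 by (simp add: ennreal_of_nat_eq_real_of_nat ennreal_mult' C_def)
  also have "real n * (C * (2*r) ^ CARD('n)) = C * 2 ^ CARD('n) * t"
    using False by (simp add: power_mult_distrib r_pow)
  finally show ?thesis unfolding C_def Q_def .
qed

lemma fast_approx_set_fiber_null:
  fixes x :: "real ^ 'n"
  shows "Pair x -` fast_approx_set \<in> null_sets lborel"
proof (rule null_sets_lborel_if_cube_inter_null)
  have fiber_sets: "Pair x -` S \<in> sets lborel" if "S \<in> sets borel" for S :: "((real ^ 'n) \<times> (real ^ 'n)) set"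
    using that sets_Pair1[of S lborel lborel] unfolding lborel_prod by simp
  show "Pair x -` fast_approx_set \<in> sets lborel"
    by (intro fiber_sets fast_approx_set_borel)
  fix M :: nat
  define Q where "Q = cbox (- vec (real M)) (vec (real M) :: real ^ 'n)"
  define C where "C = real ((2*M+3) ^ CARD('n)) * 2 ^ CARD('n)"
  have Q_sets: "Q \<in> sets lborel"
    unfolding Q_def sets_lborel by (intro borel_closed closed_cbox)
  have bound: "emeasure lborel (Pair x -` fast_approx_set \<inter> Q) \<le> ennreal (C / real (Suc j))" for j
  proof (rule emeasure_le_of_subset_liminf)
    define t where "t = 1 / real (Suc j)"
    have "Pair x -` approx_set t n \<inter> Q \<in> sets lborel" for n
      by (intro sets.Int fiber_sets borel_open open_approx_set Q_sets)
    then show "range (\<lambda>n. Pair x -` approx_set t n \<inter> Q) \<subseteq> sets lborel" by blast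
    show "Pair x -` fast_approx_set \<inter> Q \<subseteq> (\<Union>K. \<Inter>n\<in>{K..}. Pair x -` approx_set t n \<inter> Q)"
      unfolding fast_approx_set_def t_def by auto
    show "emeasure lborel (Pair x -` approx_set t n \<inter> Q) \<le> ennreal (C / real (Suc j))" for n
      using emeasure_approx_set_fiber_cube_le[of t x n M] unfolding C_def Q_def t_def
      by (simp add: divide_le_eq_1)
  qed
  have "(\<lambda>j. ennreal (C / real (Suc j))) \<longlonglongrightarrow> ennreal 0"
    by (intro tendsto_ennrealI LIMSEQ_Suc[OF lim_const_over_n])
  then have "emeasure lborel (Pair x -` fast_approx_set \<inter> Q) \<le> ennreal 0"
    by (rule LIMSEQ_le_const) (use bound in auto)
  then show "emeasure lborel (Pair x -` fast_approx_set \<inter> cbox (- vec (real M)) (vec (real M))) = 0"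
    unfolding Q_def by simp
qed

lemma fast_approx_set_null: "(fast_approx_set :: ((real ^ 'n) \<times> (real ^ 'n)) set) \<in> null_sets lborel"
proof -
  have "(fast_approx_set :: ((real ^ 'n) \<times> (real ^ 'n)) set) \<in> sets (lborel \<Otimes>\<^sub>M lborel)"
    unfolding lborel_prod using fast_approx_set_borel by simp
  then have "fast_approx_set \<in> null_sets (lborel \<Otimes>\<^sub>M (lborel :: (real ^ 'n) measure))"
    using fast_approx_set_fiber_null by (rule lborel.null_sets_pair_measure_if_fibers_null)
  then show ?thesis unfolding lborel_prod .
qed

theorem theorem2:
  shows "(Pi_set :: ((real ^ 'n) \<times> (real ^ 'n)) set) \<in> sets lebesgue
         \<and> emeasure lebesgue (Pi_set :: ((real ^ 'n) \<times> (real ^ 'n)) set) = 0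
         \<and> (\<forall>x :: real ^ 'n. Phi x \<in> null_sets lebesgue)"
proof -
  have Pi_null: "(Pi_set :: ((real ^ 'n) \<times> (real ^ 'n)) set) \<in> null_sets lebesgue"
    by (rule null_sets_completion_subset[OF Pi_set_subset_fast_approx_set
          null_sets_completionI[OF fast_approx_set_null]])
  have "Phi x \<in> null_sets lebesgue" for x :: "real ^ 'n"
  proof -
    have "Phi x \<subseteq> Pair x -` fast_approx_set"
      using Pi_set_subset_fast_approx_set unfolding Phi_def by auto
    then show ?thesis
      by (rule null_sets_completion_subset[OF _ null_sets_completionI[OF fast_approx_set_fiber_null]])
  qed
  with Pi_null show ?thesis by auto
qed

end
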